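(* Let $k,n\ge1$, $T:\{0,1\}^k\to\{0,1\}$ a truth table, and $\gamma\in\mathbb R$. For every triple $(\mathbf z^{[1]},\mathbf z^{[0]},\mathbf z^{[-1]})$ of $n$-bit strings with configuration basis numbers $\mathbf n=(n_s)_{s\in\{0,1\}^3}$, $$\mathbf E_\sigma\Big[\exp\Big(-\tfrac{i\gamma}{2}\big(\mathbf 1[\mathbf z^{[1]}\vdash\sigma]-\mathbf 1[\mathbf z^{[-1]}\vdash\sigma]\big)\Big)\mathbf 1[\mathbf z^{[0]}\vdash\sigma]\Big]=2^{-k}\sum_{\mathbf y\in\{0,1\}^3}\sum_{\mathbf k\in\mathcal P(k)}\big|\mathcal Z(\mathbf y,\mathbf k)\big|\Big(\prod_{s\in\{0,1\}^3}\Big(\frac{n_s+n_{\bar s}}{n}\Big)^{k_s}\Big)\exp\Big(-\tfrac{i\gamma}{2}(y^{[1]}-y^{[-1]})\Big)y^{[0]}.$$ In particular, this expectation depends on the triple only through the reduced configuration basis numbers $n_{0ab}+n_{1\bar a\bar b}$, $a,b\in\{0,1\}$, and is a polynomial in them.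
   Context: A clause on $n$ variables is $\sigma=((l_0,\nu_0),\dots,(l_{k-1},\nu_{k-1}))$ with $l_q\in\{0,\dots,n-1\}$, $\nu_q\in\{0,1\}$; $\mathbf x\in\{0,1\}^n$ satisfies $\sigma$ ($\mathbf x\vdash\sigma$) iff $T(x_{l_0}\oplus\nu_0,\dots,x_{l_{k-1}}\oplus\nu_{k-1})=1$. A random clause has all $l_q$ independent uniform in $\{0,\dots,n-1\}$ (repetitions allowed) and all $\nu_q$ independent uniform in $\{0,1\}$; $\mathbf E_\sigma$ is expectation over it. Configuration basis numbers of a triple of $q$-bit strings: $q_s=|\{j:(w^{[1]}_j,w^{[0]}_j,w^{[-1]}_j)=s\}|$, $s=s^{[1]}s^{[0]}s^{[-1]}\in\{0,1\}^3$; $\bar s$ (and $\bar a$ for a bit $a$) denotes complement. $\mathcal P(k)$ is the set of families $(k_s)_{s\in\{0,1\}^3}$ of nonnegative integers summing to $k$. $\mathcal Z(\mathbf y,\mathbf k)$ is the set of triples $(\mathbf w^{[1]},\mathbf w^{[0]},\mathbf w^{[-1]})$ of $k$-bit strings with $T(\mathbf w^{[t]})=y^{[t]}$ for all $t\in\{1,0,-1\}$ and configuration basis numbers $\mathbf k$. *)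

theory Defs
  imports Complex_Main
begin

text \<open>Bits are booleans (True = 1). A bit string is a bool list; a clause on n variables is a
list of pairs (l, nu) with l < n. A truth table is T :: bool list => bool, applied to k-bit lists.\<close>

type_synonym clause = "(nat \<times> bool) list"
type_synonym config = "bool \<times> bool \<times> bool"

definition clauses :: "nat \<Rightarrow> nat \<Rightarrow> clause set" where
  "clauses n k = {\<sigma>. length \<sigma> = k \<and> (\<forall>p\<in>set \<sigma>. fst p < n)}"

definition sat :: "(bool list \<Rightarrow> bool) \<Rightarrow> bool list \<Rightarrow> clause \<Rightarrow> bool" where
  "sat T x \<sigma> = T (map (\<lambda>(l, \<nu>). (x ! l) \<noteq> \<nu>) \<sigma>)"

definition clause_expect :: "nat \<Rightarrow> nat \<Rightarrow> (clause \<Rightarrow> complex) \<Rightarrow> complex" where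
  "clause_expect n k f = (\<Sum>\<sigma>\<in>clauses n k. f \<sigma>) / of_nat (card (clauses n k))"

definition bitv :: "bool \<Rightarrow> complex" where
  "bitv b = (if b then 1 else 0)"

definition cbn :: "nat \<Rightarrow> bool list \<Rightarrow> bool list \<Rightarrow> bool list \<Rightarrow> config \<Rightarrow> nat" where
  "cbn q w1 w0 wm s = card {j. j < q \<and> (w1 ! j, w0 ! j, wm ! j) = s}"

definition ccompl :: "config \<Rightarrow> config" where
  "ccompl s = (case s of (a, b, c) \<Rightarrow> (\<not> a, \<not> b, \<not> c))"

definition Pk :: "nat \<Rightarrow> (config \<Rightarrow> nat) set" where
  "Pk k = {kk. (\<Sum>s\<in>UNIV. kk s) = k}"

definition Zset :: "(bool list \<Rightarrow> bool) \<Rightarrow> nat \<Rightarrow> config \<Rightarrow> (config \<Rightarrow> nat)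
    \<Rightarrow> (bool list \<times> bool list \<times> bool list) set" where
  "Zset T k y kk = {(w1, w0, wm). length w1 = k \<and> length w0 = k \<and> length wm = k \<and>
      T w1 = fst y \<and> T w0 = fst (snd y) \<and> T wm = snd (snd y) \<and> cbn k w1 w0 wm = kk}"

definition phase :: "real \<Rightarrow> bool \<Rightarrow> bool \<Rightarrow> complex" where
  "phase \<gamma> a b = exp (- (\<i> * of_real \<gamma> / 2) * (bitv a - bitv b))"

definition LHS :: "nat \<Rightarrow> nat \<Rightarrow> (bool list \<Rightarrow> bool) \<Rightarrow> real
    \<Rightarrow> bool list \<Rightarrow> bool list \<Rightarrow> bool list \<Rightarrow> complex" where
  "LHS n k T \<gamma> z1 z0 zm = clause_expect n k
     (\<lambda>\<sigma>. phase \<gamma> (sat T z1 \<sigma>) (sat T zm \<sigma>) * bitv (sat T z0 \<sigma>))"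

end

theory Submission
  imports Defs "HOL-Library.FuncSet"
begin

(*
  A literal (l, \<nu>) of a clause sees the configuration (z1_l, z0_l, zm_l) xor (\<nu>, \<nu>, \<nu>), and
  the integrand depends on the clause only through the word of these k configurations. The
  literals producing configuration s are the (l, 0) with z_l = s and the (l, 1) with z_l = s-bar,
  so the configuration word of a uniform clause has independent letters, s occurring with
  probability (n_s + n_s-bar) / (2n). Grouping the words by their three truth values and by their
  configuration basis numbers gives the formula. As n_s + n_s-bar is a reduced configuration
  basis number for s or for s-bar, the expectation only depends on these.
*)

lemma card_lists_with_map_eq:
  "card {\<sigma>. set \<sigma> \<subseteq> A \<and> map w \<sigma> = ws} = (\<Prod>s\<leftarrow>ws. card {p\<in>A. w p = s})"
proof (induction ws)
  case Nil
  have "{\<sigma>. set \<sigma> \<subseteq> A \<and> map w \<sigma> = []} = {[]}" by auto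
  then show ?case by simp
next
  case (Cons s ws)
  have "{\<sigma>. set \<sigma> \<subseteq> A \<and> map w \<sigma> = s # ws} =
      (\<lambda>(p, \<tau>). p # \<tau>) ` ({p\<in>A. w p = s} \<times> {\<tau>. set \<tau> \<subseteq> A \<and> map w \<tau> = ws})"
    by (auto simp: Cons_eq_map_conv)
  moreover have "inj (\<lambda>(p :: 'a, \<tau>). p # \<tau>)"
    by (auto simp: inj_def)
  ultimately show ?case
    using Cons.IH by (simp add: card_image inj_on_subset card_cartesian_product)
qed

lemma prod_list_map_eq_prod_power_count:
  fixes h :: "'a::finite \<Rightarrow> 'b::comm_monoid_mult"
  shows "(\<Prod>x\<leftarrow>xs. h x) = (\<Prod>s\<in>UNIV. h s ^ count_list xs s)"
proof (induction xs)
  case (Cons x xs)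
  have "(\<Prod>s\<in>UNIV. h s ^ count_list (x # xs) s) =
      (\<Prod>s\<in>UNIV. (if x = s then h s else 1) * h s ^ count_list xs s)"
    by (rule prod.cong) auto
  also have "\<dots> = h x * (\<Prod>s\<in>UNIV. h s ^ count_list xs s)"
    by (simp add: prod.distrib)
  finally show ?case using Cons.IH by simp
qed simp

lemma of_nat_prod_list_divide_power_length:
  fixes h :: "'a::finite \<Rightarrow> nat" and d :: "'b::field"
  shows "of_nat (\<Prod>x\<leftarrow>xs. h x) / d ^ length xs = (\<Prod>s\<in>UNIV. (of_nat (h s) / d) ^ count_list xs s)"
proof -
  have "d ^ length xs = (\<Prod>s\<in>UNIV. d ^ count_list xs s)"
    using sum_count_set[of xs UNIV] by (simp add: power_sum[symmetric])
  then show ?thesis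
    by (simp add: prod_list_map_eq_prod_power_count of_nat_prod prod_dividef power_divide)
qed

lemma sum_comp_eq_sum_card_fibres:
  assumes "finite S" "finite K" "g ` S \<subseteq> K"
  shows "(\<Sum>x\<in>S. f (g x)) = (\<Sum>y\<in>K. of_nat (card {x\<in>S. g x = y}) * f y)"
proof -
  have "(\<Sum>x\<in>S. f (g x)) = (\<Sum>y\<in>K. \<Sum>x\<in>{x\<in>S. g x = y}. f (g x))"
    using assms by (rule sum.group[symmetric])
  also have "\<dots> = (\<Sum>y\<in>K. of_nat (card {x\<in>S. g x = y}) * f y)"
    by (rule sum.cong) auto
  finally show ?thesis .
qed

lemma finite_lists_of_length [simp]: "finite {xs :: 'a::finite list. length xs = k}"
  using finite_lists_length_eq[of "UNIV :: 'a set" k] by simp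

lemma sum_lists_map_eq_weighted_sum:
  fixes w :: "'a \<Rightarrow> 'b::finite" and f :: "'b list \<Rightarrow> 'c::comm_semiring_1"
  assumes "finite A"
  shows "(\<Sum>\<sigma>\<in>{\<sigma>. set \<sigma> \<subseteq> A \<and> length \<sigma> = k}. f (map w \<sigma>)) =
    (\<Sum>ws\<in>{ws. length ws = k}. of_nat (\<Prod>s\<leftarrow>ws. card {p\<in>A. w p = s}) * f ws)"
proof -
  have "{\<sigma>. \<sigma> \<in> {\<sigma>. set \<sigma> \<subseteq> A \<and> length \<sigma> = k} \<and> map w \<sigma> = ws} =
      {\<sigma>. set \<sigma> \<subseteq> A \<and> map w \<sigma> = ws}" if "length ws = k" for ws
    using that by auto
  then show ?thesis
    using assms finite_lists_length_eq[OF assms]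
    by (subst sum_comp_eq_sum_card_fibres[where K = "{ws. length ws = k}"])
      (auto simp: card_lists_with_map_eq intro!: sum.cong)
qed

definition unzip3 :: "('a \<times> 'b \<times> 'c) list \<Rightarrow> 'a list \<times> 'b list \<times> 'c list" where
  "unzip3 ws = (map fst ws, map (fst \<circ> snd) ws, map (snd \<circ> snd) ws)"

lemma bij_betw_unzip3:
  "bij_betw unzip3 {ws. length ws = k}
     {(xs, ys, zs). length xs = k \<and> length ys = k \<and> length zs = k}"
proof (rule bij_betw_byWitness[where f' = "\<lambda>(xs, ys, zs). zip xs (zip ys zs)"])
  show "\<forall>ws\<in>{ws. length ws = k}. (\<lambda>(xs, ys, zs). zip xs (zip ys zs)) (unzip3 ws) = ws"
    by (auto simp: unzip3_def list_eq_iff_nth_eq)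
  show "\<forall>t\<in>{(xs, ys, zs). length xs = k \<and> length ys = k \<and> length zs = k}.
      unzip3 ((\<lambda>(xs, ys, zs). zip xs (zip ys zs)) t) = t"
    by (auto simp: unzip3_def list_eq_iff_nth_eq)
qed (auto simp: unzip3_def)

lemma sum_unzip3_eq_sum_triples:
  "(\<Sum>ws\<in>{ws. length ws = k}. f (unzip3 ws)) =
    (\<Sum>t\<in>{(xs, ys, zs). length xs = k \<and> length ys = k \<and> length zs = k}. f t)"
  using bij_betw_unzip3 by (rule sum.reindex_bij_betw)

lemma cbn_unzip3:
  "cbn (length ws) (fst (unzip3 ws)) (fst (snd (unzip3 ws))) (snd (snd (unzip3 ws))) = count_list ws"
  by (auto simp: cbn_def unzip3_def count_list_eq_length_filter length_filter_conv_card prod_eq_iff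
      intro!: ext arg_cong[where f = card])

definition literal_config :: "bool list \<Rightarrow> bool list \<Rightarrow> bool list \<Rightarrow> nat \<times> bool \<Rightarrow> config" where
  "literal_config z1 z0 zm = (\<lambda>(l, \<nu>). (z1 ! l \<noteq> \<nu>, z0 ! l \<noteq> \<nu>, zm ! l \<noteq> \<nu>))"

definition truth_values :: "(bool list \<Rightarrow> bool) \<Rightarrow> bool list \<times> bool list \<times> bool list \<Rightarrow> config" where
  "truth_values T = (\<lambda>(w1, w0, wm). (T w1, T w0, T wm))"

lemma sat_eq_truth_values:
  "(sat T z1 \<sigma>, sat T z0 \<sigma>, sat T zm \<sigma>) =
    truth_values T (unzip3 (map (literal_config z1 z0 zm) \<sigma>))"
  by (simp add: sat_def truth_values_def unzip3_def literal_config_def case_prod_unfold o_def)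

lemma card_literal_config_eq:
  "card {p \<in> {..<n} \<times> UNIV. literal_config z1 z0 zm p = s} =
    cbn n z1 z0 zm s + cbn n z1 z0 zm (ccompl s)"
proof -
  let ?J = "\<lambda>s. {j. j < n \<and> (z1 ! j, z0 ! j, zm ! j) = s}"
  have fibre: "{p \<in> {..<n} \<times> UNIV. literal_config z1 z0 zm p = s} =
      (\<lambda>l. (l, False)) ` ?J s \<union> (\<lambda>l. (l, True)) ` ?J (ccompl s)"
    by (cases s) (auto simp: literal_config_def ccompl_def image_iff)
  show ?thesis
    unfolding fibre cbn_def by (subst card_Un_disjoint) (auto simp: card_image inj_on_def)
qed

lemma cbn_in_Pk: "cbn k w1 w0 wm \<in> Pk k"
proof -
  have "(\<Sum>s\<in>UNIV. card {j. j \<in> {..<k} \<and> (w1 ! j, w0 ! j, wm ! j) = s}) = card {..<k}"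
    unfolding card_eq_sum by (rule sum.group) auto
  then show ?thesis by (simp add: Pk_def cbn_def)
qed

lemma finite_Pk: "finite (Pk k)"
proof (rule finite_subset)
  show "Pk k \<subseteq> PiE UNIV (\<lambda>_. {..k})"
  proof
    fix kk assume "kk \<in> Pk k"
    then have "kk s \<le> k" for s
      using member_le_sum[of s UNIV kk] by (simp add: Pk_def)
    then show "kk \<in> PiE UNIV (\<lambda>_. {..k})" by (simp add: PiE_iff)
  qed
qed (simp add: finite_PiE)

definition integrand :: "real \<Rightarrow> config \<Rightarrow> complex" where
  "integrand \<gamma> y = phase \<gamma> (fst y) (snd (snd y)) * bitv (fst (snd y))"

lemma LHS_eq_sum_config_words:
  "LHS n k T \<gamma> z1 z0 zm =
    (1 / 2 ^ k) * (\<Sum>ws\<in>{ws. length ws = k}.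
      (\<Prod>s\<in>UNIV. (of_nat (cbn n z1 z0 zm s + cbn n z1 z0 zm (ccompl s)) / of_nat n) ^ count_list ws s) *
      integrand \<gamma> (truth_values T (unzip3 ws)))"
proof -
  define A where "A = {..<n} \<times> (UNIV :: bool set)"
  have "finite A" by (simp add: A_def)
  have clauses: "clauses n k = {\<sigma>. set \<sigma> \<subseteq> A \<and> length \<sigma> = k}"
    by (auto simp: clauses_def A_def)
  have card_clauses: "card (clauses n k) = (2 * n) ^ k"
    using card_lists_length_eq[OF \<open>finite A\<close>] by (simp add: clauses A_def card_cartesian_product)
  have "LHS n k T \<gamma> z1 z0 zm =
      (\<Sum>\<sigma>\<in>clauses n k. integrand \<gamma> (truth_values T (unzip3 (map (literal_config z1 z0 zm) \<sigma>)))) /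
        (2 * n) ^ k"
    unfolding LHS_def clause_expect_def card_clauses sat_eq_truth_values[symmetric]
    by (simp add: integrand_def)
  also have "\<dots> = (\<Sum>ws\<in>{ws. length ws = k}.
      of_nat (\<Prod>s\<leftarrow>ws. card {p\<in>A. literal_config z1 z0 zm p = s}) *
      integrand \<gamma> (truth_values T (unzip3 ws))) / (2 * n) ^ k"
    unfolding clauses
    by (simp only: sum_lists_map_eq_weighted_sum[OF \<open>finite A\<close>,
          where f = "\<lambda>ws. integrand \<gamma> (truth_values T (unzip3 ws))"])
  also have "\<dots> = (1 / 2 ^ k) * (\<Sum>ws\<in>{ws. length ws = k}.
      of_nat (\<Prod>s\<leftarrow>ws. card {p\<in>A. literal_config z1 z0 zm p = s}) / of_nat n ^ length ws *
      integrand \<gamma> (truth_values T (unzip3 ws)))"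
    by (auto simp: sum_divide_distrib sum_distrib_left power_mult_distrib intro!: sum.cong)
  finally show ?thesis
    unfolding of_nat_prod_list_divide_power_length A_def card_literal_config_eq .
qed

lemma sum_config_words_eq_sum_Zset:
  fixes F :: "(config \<Rightarrow> nat) \<Rightarrow> 'a::comm_semiring_1" and G :: "config \<Rightarrow> 'a"
  shows "(\<Sum>ws\<in>{ws. length ws = k}. F (count_list ws) * G (truth_values T (unzip3 ws))) =
    (\<Sum>y\<in>UNIV. \<Sum>kk\<in>Pk k. of_nat (card (Zset T k y kk)) * F kk * G y)"
proof -
  define key where "key t = (truth_values T t, cbn k (fst t) (fst (snd t)) (snd (snd t)))"
    for t :: "bool list \<times> bool list \<times> bool list"
  define Tr :: "(bool list \<times> bool list \<times> bool list) set"
    where "Tr = {(w1, w0, wm). length w1 = k \<and> length w0 = k \<and> length wm = k}"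
  define \<Phi> where "\<Phi> yk = F (snd yk) * G (fst yk)" for yk
  have "finite Tr"
    using bij_betw_finite[OF bij_betw_unzip3] by (simp add: Tr_def)
  have "key ` Tr \<subseteq> UNIV \<times> Pk k"
    by (auto simp: key_def cbn_in_Pk)
  have Zset_fibre: "Zset T k y kk = {t\<in>Tr. key t = (y, kk)}" for y kk
    by (auto simp: Zset_def Tr_def key_def truth_values_def prod_eq_iff)
  have "(\<Sum>ws\<in>{ws. length ws = k}. F (count_list ws) * G (truth_values T (unzip3 ws))) =
      (\<Sum>ws\<in>{ws. length ws = k}. \<Phi> (key (unzip3 ws)))"
    by (rule sum.cong) (auto simp: \<Phi>_def key_def cbn_unzip3)
  also have "\<dots> = (\<Sum>t\<in>Tr. \<Phi> (key t))"
    unfolding Tr_def by (rule sum_unzip3_eq_sum_triples)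
  also have "\<dots> = (\<Sum>yk\<in>UNIV \<times> Pk k. of_nat (card {t\<in>Tr. key t = yk}) * \<Phi> yk)"
    using \<open>finite Tr\<close> _ \<open>key ` Tr \<subseteq> UNIV \<times> Pk k\<close>
    by (rule sum_comp_eq_sum_card_fibres) (simp add: finite_Pk)
  finally show ?thesis
    by (simp add: sum.cartesian_product Zset_fibre \<Phi>_def mult.assoc case_prod_beta')
qed

(* No hypotheses are needed: because x / 0 = 0 the formula also holds for n = 0. *)
lemma LHS_eq_config_sum:
  "LHS n k T \<gamma> z1 z0 zm =
      (1 / 2 ^ k) * (\<Sum>y\<in>(UNIV :: config set). \<Sum>kk\<in>Pk k.
         of_nat (card (Zset T k y kk)) *
         (\<Prod>s\<in>(UNIV :: config set).
            (of_nat (cbn n z1 z0 zm s + cbn n z1 z0 zm (ccompl s)) / of_nat n) ^ kk s) *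
         phase \<gamma> (fst y) (snd (snd y)) * bitv (fst (snd y)))"
  unfolding LHS_eq_sum_config_words
  by (subst sum_config_words_eq_sum_Zset[where
        F = "\<lambda>kk. \<Prod>s\<in>UNIV. (of_nat (cbn n z1 z0 zm s + cbn n z1 z0 zm (ccompl s)) / of_nat n) ^ kk s"])
    (simp add: integrand_def mult.assoc)

lemma complement_sums_eqI:
  fixes f g :: "config \<Rightarrow> nat"
  assumes "\<forall>a b. f (False, a, b) + f (True, \<not> a, \<not> b) = g (False, a, b) + g (True, \<not> a, \<not> b)"
  shows "f s + f (ccompl s) = g s + g (ccompl s)"
proof -
  obtain a b d where s: "s = (a, b, d)" by (cases s)
  show ?thesis
  proof (cases a)
    case True
    then show ?thesis
      using assms[rule_format, of "\<not> b" "\<not> d"] by (simp add: s ccompl_def add.commute)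
  next
    case False
    then show ?thesis
      using assms[rule_format, of b d] by (simp add: s ccompl_def)
  qed
qed

theorem mainTheorem10:
  fixes k n :: nat and T :: "bool list \<Rightarrow> bool" and \<gamma> :: real
    and z1 z0 zm :: "bool list"
  assumes "k \<ge> 1" "n \<ge> 1"
    and "length z1 = n" "length z0 = n" "length zm = n"
  shows "LHS n k T \<gamma> z1 z0 zm =
      (1 / 2 ^ k) * (\<Sum>y\<in>(UNIV :: config set). \<Sum>kk\<in>Pk k.
         of_nat (card (Zset T k y kk)) *
         (\<Prod>s\<in>(UNIV :: config set).
            (of_nat (cbn n z1 z0 zm s + cbn n z1 z0 zm (ccompl s)) / of_nat n) ^ kk s) *
         phase \<gamma> (fst y) (snd (snd y)) * bitv (fst (snd y)))
    \<and> (\<forall>u1 u0 um. length u1 = n \<and> length u0 = n \<and> length um = n \<and>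
         (\<forall>a b. cbn n u1 u0 um (False, a, b) + cbn n u1 u0 um (True, \<not> a, \<not> b)
              = cbn n z1 z0 zm (False, a, b) + cbn n z1 z0 zm (True, \<not> a, \<not> b))
         \<longrightarrow> LHS n k T \<gamma> u1 u0 um = LHS n k T \<gamma> z1 z0 zm)"
proof (rule conjI[OF LHS_eq_config_sum], intro allI impI)
  fix u1 u0 um :: "bool list"
  assume "length u1 = n \<and> length u0 = n \<and> length um = n \<and>
    (\<forall>a b. cbn n u1 u0 um (False, a, b) + cbn n u1 u0 um (True, \<not> a, \<not> b)
         = cbn n z1 z0 zm (False, a, b) + cbn n z1 z0 zm (True, \<not> a, \<not> b))"
  then have "cbn n u1 u0 um s + cbn n u1 u0 um (ccompl s) =
      cbn n z1 z0 zm s + cbn n z1 z0 zm (ccompl s)" for s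
    by (intro complement_sums_eqI) simp
  then show "LHS n k T \<gamma> u1 u0 um = LHS n k T \<gamma> z1 z0 zm"
    by (simp only: LHS_eq_config_sum)
qed

end
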